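(* For the OGD-CB algorithm (with any value sequence and any realization of competing bids), for every $t\le T_0+1$ we have $\lambda_t\in[0,\bar v/\rho-1]$.
   Context: Model: constants $\bar v>0$, $\rho\in(0,\bar v]$; $T$ rounds; budget $B=\rho T$. Round $t$: value $v_t\in[0,\bar v]$, highest competing bid $p_t\in[0,\bar v]$; buyer picks $x_t\in\{0,1\}$, pays $x_tc_t$ with $c_t=p_t\mathbf 1[v_t\ge p_t]$. Full information: $p_t$ observed every round; partial information: $p_t$ observed only when $x_t=1$. OGD-CB algorithm: $\mathcal I_1=\emptyset$, $B_1=B$, $\lambda_1=0$. For $t=1,\dots,T$: observe $v_t$. If $t=1$: $x_1=1$, $\lambda_2=\lambda_1$. Otherwise: $\epsilon_t=\sqrt{(\ln 2+2\ln T)/(2|\mathcal I_t|)}$; $\tilde r_t(v)=\frac1{|\mathcal I_t|}\sum_{\tau\in\mathcal I_t}(v-p_\tau)^++\epsilon_tv$; $\tilde c_t(v)=\frac1{|\mathcal I_t|}\sum_{\tau\in\mathcal I_t}p_\tau\mathbf 1[v\ge p_\tau]-2\epsilon_tv$; $x_t=\mathbf 1[\tilde r_t(v_t)\ge\lambda_t\tilde c_t(v_t)]$; $\eta_t=1/(\bar v\sqrt t)$; $\lambda_{t+1}=(\lambda_t+\eta_t(x_t\tilde c_t(v_t)-\rho))^+$. If (full information) or (partial information and $x_t=1$) observe $p_t$ and set $\mathcal I_{t+1}=\mathcal I_t\cup\{t\}$, else $\mathcal I_{t+1}=\mathcal I_t$. Set $B_{t+1}=B_t-x_tc_t$; if $B_{t+1}<\bar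 v$, stop. $T_0$ is the stopping round (or $T$). *)

theory Defs
  imports Complex_Main
begin

text \<open>Parameters: vbar, rho, horizon T, information mode
  full (True = full information, False = partial information), value sequence v,
  highest competing bid sequence p (both indexed by rounds 1..T).
  The algorithm state at the start of round t is (I_t, B_t, lambda_t).\<close>

type_synonym ogd_state = "nat set \<times> real \<times> real"

definition eps_ogd :: "nat \<Rightarrow> nat set \<Rightarrow> real" where
  "eps_ogd T I = sqrt ((ln 2 + 2 * ln (real T)) / (2 * real (card I)))"

definition r_tilde :: "nat \<Rightarrow> (nat \<Rightarrow> real) \<Rightarrow> nat set \<Rightarrow> real \<Rightarrow> real" where
  "r_tilde T p I x = (\<Sum>\<tau>\<in>I. max (x - p \<tau>) 0) / real (card I) + eps_ogd T I * x"

definition c_tilde :: "nat \<Rightarrow> (nat \<Rightarrow> real) \<Rightarrow> nat set \<Rightarrow> real \<Rightarrow> real" where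
  "c_tilde T p I x = (\<Sum>\<tau>\<in>I. p \<tau> * (if x \<ge> p \<tau> then 1 else 0)) / real (card I)
                      - 2 * eps_ogd T I * x"

definition ogd_x :: "nat \<Rightarrow> (nat \<Rightarrow> real) \<Rightarrow> (nat \<Rightarrow> real) \<Rightarrow> nat \<Rightarrow> ogd_state \<Rightarrow> bool" where
  "ogd_x T v p t s = (case s of (I, B, lam) \<Rightarrow>
      if t = 1 then True
      else r_tilde T p I (v t) \<ge> lam * c_tilde T p I (v t))"

definition pay :: "(nat \<Rightarrow> real) \<Rightarrow> (nat \<Rightarrow> real) \<Rightarrow> nat \<Rightarrow> real" where
  "pay v p t = (if v t \<ge> p t then p t else 0)"

definition ogd_step :: "real \<Rightarrow> real \<Rightarrow> nat \<Rightarrow> bool \<Rightarrow> (nat \<Rightarrow> real) \<Rightarrow> (nat \<Rightarrow> real)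
                         \<Rightarrow> nat \<Rightarrow> ogd_state \<Rightarrow> ogd_state" where
  "ogd_step vbar rho T full v p t s = (case s of (I, B, lam) \<Rightarrow>
      let x = ogd_x T v p t s;
          lam' = (if t = 1 then lam
                  else max 0 (lam + (1 / (vbar * sqrt (real t))) *
                          ((if x then c_tilde T p I (v t) else 0) - rho)));
          I' = (if full \<or> x then insert t I else I);
          B' = B - (if x then pay v p t else 0)
      in (I', B', lam'))"

text \<open>ogd_state_at ... t is the state at the start of round t (t >= 1):
  state 1 = ({}, rho*T, 0), state (t+1) = step t (state t).  The recursion is
  continued past the stopping round; only rounds t <= T0 + 1 are used.\<close>
fun ogd_state_at :: "real \<Rightarrow> real \<Rightarrow> nat \<Rightarrow> bool \<Rightarrow> (nat \<Rightarrow> real) \<Rightarrow> (nat \<Rightarrow> real)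
                      \<Rightarrow> nat \<Rightarrow> ogd_state" where
  "ogd_state_at vbar rho T full v p 0 = ({}, rho * real T, 0)"
| "ogd_state_at vbar rho T full v p (Suc t) =
     (if t = 0 then ({}, rho * real T, 0)
      else ogd_step vbar rho T full v p t (ogd_state_at vbar rho T full v p t))"

definition ogd_budget :: "real \<Rightarrow> real \<Rightarrow> nat \<Rightarrow> bool \<Rightarrow> (nat \<Rightarrow> real) \<Rightarrow> (nat \<Rightarrow> real) \<Rightarrow> nat \<Rightarrow> real" where
  "ogd_budget vbar rho T full v p t = fst (snd (ogd_state_at vbar rho T full v p t))"

definition ogd_lambda :: "real \<Rightarrow> real \<Rightarrow> nat \<Rightarrow> bool \<Rightarrow> (nat \<Rightarrow> real) \<Rightarrow> (nat \<Rightarrow> real) \<Rightarrow> nat \<Rightarrow> real" where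
  "ogd_lambda vbar rho T full v p t = snd (snd (ogd_state_at vbar rho T full v p t))"

definition ogd_T0 :: "real \<Rightarrow> real \<Rightarrow> nat \<Rightarrow> bool \<Rightarrow> (nat \<Rightarrow> real) \<Rightarrow> (nat \<Rightarrow> real) \<Rightarrow> nat" where
  "ogd_T0 vbar rho T full v p =
     (if \<exists>t. 1 \<le> t \<and> t \<le> T \<and> ogd_budget vbar rho T full v p (Suc t) < vbar
      then (LEAST t. 1 \<le> t \<and> t \<le> T \<and> ogd_budget vbar rho T full v p (Suc t) < vbar)
      else T)"

end

theory Submission
  imports Defs
begin

text \<open>Write \<open>a = vbar / rho\<close>. The only way \<open>\<lambda>\<close> can grow is a bid with estimated cost
  \<open>c > rho\<close>, and the bid rule \<open>r \<ge> \<lambda> c\<close> together with \<open>r + c \<le> v\<^sub>t \<le> vbar\<close> forces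
  \<open>(\<lambda> + 1) c \<le> vbar\<close>. With step size at most \<open>1 / vbar\<close> the new value is then at most
  \<open>L - 1 + 1/L - 1/a\<close> for \<open>L = \<lambda> + 1 \<in> [1, a]\<close>, which is at most \<open>a - 1\<close> because
  \<open>x + 1/x\<close> is increasing on \<open>[1, \<infinity>)\<close>.\<close>

lemma plus_inverse_mono:
  fixes x y :: real
  assumes "1 \<le> x" "x \<le> y"
  shows "x + 1 / x \<le> y + 1 / y"
proof -
  have "1 / (x * y) \<le> 1"
    using assms mult_mono[of 1 x 1 y] by simp
  then have "0 \<le> (y - x) * (1 - 1 / (x * y))"
    using assms by simp
  also have "(y - x) * (1 - 1 / (x * y)) = (y + 1 / y) - (x + 1 / x)"
    using assms by (simp add: field_simps)
  finally show ?thesis by simp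
qed

lemma projected_step_le:
  fixes vbar rho lam g eta :: real
  assumes "0 < rho" "rho \<le> vbar" "0 \<le> lam" "lam \<le> vbar / rho - 1"
    and "(lam + 1) * g \<le> vbar" "0 \<le> eta" "eta \<le> 1 / vbar"
  shows "max 0 (lam + eta * (g - rho)) \<le> vbar / rho - 1"
proof -
  have a_ge: "0 \<le> vbar / rho - 1"
    using assms by (simp add: field_simps)
  have "lam + eta * (g - rho) \<le> vbar / rho - 1"
  proof (cases "g \<le> rho")
    case True
    then have "eta * (g - rho) \<le> 0"
      using assms by (simp add: mult_nonneg_nonpos)
    then show ?thesis using assms by simp
  next
    case False
    define L where "L = lam + 1"
    define a where "a = vbar / rho"
    have L: "1 \<le> L" "L \<le> a"
      using assms unfolding L_def a_def by simp_all
    have "g \<le> vbar / L"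
      using assms(5) L(1) unfolding L_def by (simp add: pos_le_divide_eq mult.commute)
    then have g_le: "g / vbar \<le> 1 / L"
      using assms(1,2) by (simp add: divide_le_eq)
    have "eta * (g - rho) \<le> (g - rho) / vbar"
      using mult_right_mono[OF assms(7), of "g - rho"] False by simp
    also have "\<dots> = g / vbar - 1 / a"
      using assms(1,2) unfolding a_def by (simp add: diff_divide_distrib)
    also have "\<dots> \<le> 1 / L - 1 / a"
      using g_le by simp
    finally have "lam + eta * (g - rho) \<le> L + 1 / L - 1 - 1 / a"
      unfolding L_def by simp
    also have "\<dots> \<le> a - 1"
      using plus_inverse_mono[OF L] by simp
    finally show ?thesis unfolding a_def .
  qed
  then show ?thesis using a_ge by simp
qed

lemma eps_ogd_nonneg: "0 \<le> eps_ogd T I"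
  unfolding eps_ogd_def by (cases "T = 0") simp_all

lemma r_tilde_plus_c_tilde_le:
  fixes x :: real
  assumes "0 \<le> x"
  shows "r_tilde T p I x + c_tilde T p I x \<le> x"
proof -
  let ?f = "\<lambda>\<tau>. max (x - p \<tau>) 0 + p \<tau> * (if x \<ge> p \<tau> then 1 else 0)"
  have "sum ?f I \<le> real (card I) * x"
    using assms by (intro sum_bounded_above) auto
  then have avg: "sum ?f I / real (card I) \<le> x"
    using assms by (cases "card I = 0") (simp_all add: divide_le_eq mult.commute)
  have "r_tilde T p I x + c_tilde T p I x = sum ?f I / real (card I) - eps_ogd T I * x"
    unfolding r_tilde_def c_tilde_def sum.distrib by (simp add: add_divide_distrib)
  also have "\<dots> \<le> x"
    using avg mult_nonneg_nonneg[OF eps_ogd_nonneg[of T I] assms] by linarith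
  finally show ?thesis .
qed

lemma ogd_x_cost_le:
  assumes "ogd_x T v p t (I, B, lam)" "t \<noteq> 1" "0 \<le> v t" "v t \<le> vbar"
  shows "(lam + 1) * c_tilde T p I (v t) \<le> vbar"
proof -
  have "lam * c_tilde T p I (v t) \<le> r_tilde T p I (v t)"
    using assms(1,2) by (simp add: ogd_x_def)
  then show ?thesis
    using r_tilde_plus_c_tilde_le[OF assms(3), of T p I] assms(4) by (simp add: algebra_simps)
qed

lemma ogd_lambda_bounds:
  fixes vbar rho :: real and T :: nat and full :: bool and v p :: "nat \<Rightarrow> real"
  assumes "0 < rho" "rho \<le> vbar"
    and "\<And>t. 1 \<le> t \<Longrightarrow> t \<le> T \<Longrightarrow> 0 \<le> v t \<and> v t \<le> vbar"
    and "t \<le> T + 1"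
  shows "0 \<le> ogd_lambda vbar rho T full v p t \<and> ogd_lambda vbar rho T full v p t \<le> vbar / rho - 1"
  using assms(4)
proof (induction t)
  case 0
  then show ?case using assms by (simp add: ogd_lambda_def field_simps)
next
  case (Suc t)
  obtain I B lam where st: "ogd_state_at vbar rho T full v p t = (I, B, lam)"
    by (metis prod_cases3)
  show ?case
  proof (cases "t \<le> 1")
    case True
    then have "ogd_lambda vbar rho T full v p (Suc t) = 0"
      using st by (auto simp: ogd_lambda_def ogd_step_def Let_def le_Suc_eq)
    then show ?thesis using assms by (simp add: field_simps)
  next
    case False
    have vt: "0 \<le> v t" "v t \<le> vbar"
      using assms(3)[of t] False Suc.prems by auto
    have lam: "0 \<le> lam" "lam \<le> vbar / rho - 1"
      using Suc.IH Suc.prems st by (simp_all add: ogd_lambda_def)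
    define g where "g = (if ogd_x T v p t (I, B, lam) then c_tilde T p I (v t) else 0)"
    define eta where "eta = 1 / (vbar * sqrt (real t))"
    have lam_Suc: "ogd_lambda vbar rho T full v p (Suc t) = max 0 (lam + eta * (g - rho))"
      using False st by (simp add: ogd_lambda_def ogd_step_def Let_def g_def eta_def)
    have "(lam + 1) * g \<le> vbar"
      using ogd_x_cost_le[of T v p t I B lam vbar] vt False assms unfolding g_def by auto
    moreover have "0 \<le> eta" "eta \<le> 1 / vbar"
      using assms False unfolding eta_def by (auto simp: field_simps)
    ultimately show ?thesis
      using projected_step_le[OF assms(1,2) lam] lam_Suc by simp
  qed
qed

lemma ogd_T0_le: "ogd_T0 vbar rho T full v p \<le> T"
  unfolding ogd_T0_def by (auto intro: LeastI2_ex)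

theorem lemma2:
  fixes vbar rho :: real and T :: nat and full :: bool and v p :: "nat \<Rightarrow> real"
  assumes "vbar > 0" and "0 < rho" and "rho \<le> vbar"
    and "\<And>t. 1 \<le> t \<Longrightarrow> t \<le> T \<Longrightarrow> 0 \<le> v t \<and> v t \<le> vbar"
    and "\<And>t. 1 \<le> t \<Longrightarrow> t \<le> T \<Longrightarrow> 0 \<le> p t \<and> p t \<le> vbar"
  shows "\<forall>t. 1 \<le> t \<and> t \<le> ogd_T0 vbar rho T full v p + 1 \<longrightarrow>
           0 \<le> ogd_lambda vbar rho T full v p t \<and>
           ogd_lambda vbar rho T full v p t \<le> vbar / rho - 1"
  using ogd_lambda_bounds[OF assms(2-4)] ogd_T0_le[of vbar rho T full v p] by simp

end
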